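(* Identify $\mathrm{SO}(2)$ with the unit circle $\mathbb{C}_1=\{z\in\mathbb{C}:|z|=1\}$. Let $G([n],E)$ be a graph with $E=E_g\cup E_b$, let $\boldsymbol{z}^\star=(z_1^\star,\dots,z_n^\star)\in\mathbb{C}_1^n$ be unknown, and suppose we observe $z_{jk}\in\mathbb{C}_1$ for $jk\in E$ with $z_{jk}=z_j^\star\overline{z_k^\star}$ for $jk\in E_g$ and $z_{jk}$ arbitrary (adversarial) for $jk\in E_b$. Let $E^j=\{k:jk\in E\}$, $E_b^j=\{k:jk\in E_b\}$, $n_j=\#(E^j)$ and $\alpha_0=\max_j\#(E_b^j)/n_j$. Assume: $\alpha_0<1/4$; there is $c\in\mathbb{C}_1$ with $d_\angle(c,\overline{z_j^\star}z_j(0))<\pi/2$ for all $j$; and for every nonempty $J\subset[n]$ with $\#(J)\le n/2$ there is $j\in J$ with $\#\big(E^j\cap([n]\setminus J)\big)>\#\big(E^j\cap J\big)$. Let $\eta\in(0,1)$ and let $(\boldsymbol{z}(t))_{t\in\mathbb{N}}$ be generated by $\eta$-damped trimmed averaging synchronization: at time $t$, with $j=t\bmod n$, $$z_j(t+1)=\mathrm{Exp}_{z_j(t)}\Big[\eta\cdot\mathrm{ave}\Big(\mathcal{T}_{0.25}\big\{\mathrm{Log}_{z_j(t)}(z_{jk}z_k(t)):k\in E^j\big\}\Big)\Big],$$ and $z_k(t+1)=z_k(t)$ for $k\ne j$. Then $\delta(\boldsymbol{z}(t))\to 0$, i.e. the algorithm exactly recovers $\boldsymbol{z}^\star$ up to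 a global rotation. Further, if $G$ is the complete graph, $\boldsymbol{z}(t)$ converges linearly to $\boldsymbol{z}^\star$ (up to global rotation), i.e. $\delta(\boldsymbol{z}(t))\to 0$ at a geometric rate.
   Context: $\arg(e^{i\theta})=\theta\in(-\pi,\pi]$; $d_\angle(z_1,z_2)=|\arg(z_1\overline{z_2})|$. $\mathrm{Exp}_z(\theta)=e^{i\theta}z$ and $\mathrm{Log}_z(y)=\arg(y\overline{z})$ (tangent spaces identified with $\mathbb{R}$). For a finite multiset $\mathcal{X}\subset\mathbb{R}$, $\mathcal{X}_p$ is its empirical $p$-quantile, $\mathcal{T}_{0.25}\mathcal{X}=\{x\in\mathcal{X}:\mathcal{X}_{0.25}\le x\le\mathcal{X}_{0.75}\}$, and $\mathrm{ave}(\mathcal{X})$ is the arithmetic mean. $\delta(\boldsymbol{z})=\max_{jk\in E}d_\angle(\overline{z_j^\star}z_j,\overline{z_k^\star}z_k)$. *)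

theory Defs
  imports "HOL-Analysis.Analysis" "HOL-Library.Multiset"
begin

definition d_ang :: "complex \<Rightarrow> complex \<Rightarrow> real" where
  "d_ang z1 z2 = \<bar>Arg (z1 * cnj z2)\<bar>"

text \<open>Exponential and logarithm maps on the circle (tangent spaces identified with R).\<close>
definition Exp_c :: "complex \<Rightarrow> real \<Rightarrow> complex" where
  "Exp_c z \<theta> = cis \<theta> * z"

definition Log_c :: "complex \<Rightarrow> complex \<Rightarrow> real" where
  "Log_c z y = Arg (y * cnj z)"

text \<open>Empirical p-quantile of a finite multiset: the ceil(p m)-th smallest element
  (inf of x with empirical cdf at x at least p), first element for p = 0.\<close>
definition emp_quantile :: "real \<Rightarrow> real multiset \<Rightarrow> real" where
  "emp_quantile p X = sorted_list_of_multiset X ! (nat \<lceil>p * real (size X)\<rceil> - 1)"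

definition trim25 :: "real multiset \<Rightarrow> real multiset" where
  "trim25 X = filter_mset (\<lambda>x. emp_quantile 0.25 X \<le> x \<and> x \<le> emp_quantile 0.75 X) X"

definition ave :: "real multiset \<Rightarrow> real" where
  "ave X = sum_mset X / real (size X)"

definition nbhd :: "(nat \<times> nat) set \<Rightarrow> nat \<Rightarrow> nat set" where
  "nbhd E j = {k. (j, k) \<in> E}"

definition delta :: "(nat \<times> nat) set \<Rightarrow> (nat \<Rightarrow> complex) \<Rightarrow> (nat \<Rightarrow> complex) \<Rightarrow> real" where
  "delta E zs z = Max (insert 0 {d_ang (cnj (zs j) * z j) (cnj (zs k) * z k) | j k. (j, k) \<in> E})"

definition tas_update ::
  "real \<Rightarrow> (nat \<times> nat) set \<Rightarrow> (nat \<Rightarrow> nat \<Rightarrow> complex) \<Rightarrow> (nat \<Rightarrow> complex) \<Rightarrow> nat \<Rightarrow> complex" where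
  "tas_update \<eta> E zobs z j =
     Exp_c (z j) (\<eta> * ave (trim25 (image_mset (\<lambda>k. Log_c (z j) (zobs j k * z k)) (mset_set (nbhd E j)))))"

end

theory Submission
  imports Defs
begin

text \<open>
  Measure each corrected estimate conj(z*_j) z_j(t) by its angle theta_j(t) relative to the
  reference point c of the initialisation hypothesis. While all angles lie in [-R, R] with
  R < pi/2, the logarithm of a good observation is exactly theta_k - theta_j, and since fewer than
  a quarter of the observations at a vertex are bad, both quartiles, hence all trimmed values and
  their mean, lie in the range of the good ones. An update is therefore a damped step into the
  current range of angles: the maximum never increases, and a vertex most of whose neighbours lie
  d below the maximum ends at least eta d / n below it. By the expansion hypothesis each round of
  n updates removes a vertex from any top set of at most n/2 vertices; after n rounds, whichever
  side of the midpoint held at most n/2 vertices has been emptied, so the spread of the angles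
  shrinks by a fixed factor every n^2 steps. As delta(z(t)) is bounded by this spread, it decays geometrically on every admissible
  graph, the complete one included.
\<close>

lemma sorted_nth_le_iff_length_filter:
  fixes xs :: "'a::linorder list"
  assumes "sorted xs" "k < length xs"
  shows "xs ! k \<le> a \<longleftrightarrow> k < length (filter (\<lambda>x. x \<le> a) xs)"
proof
  assume "xs ! k \<le> a"
  then have "\<forall>x\<in>set (take (Suc k) xs). x \<le> a"
    using assms by (auto simp: in_set_conv_nth less_Suc_eq_le) (meson order_trans sorted_nth_mono)
  then have "length (filter (\<lambda>x. x \<le> a) (take (Suc k) xs)) = Suc k"
    using assms(2) by simp
  moreover have "length (filter (\<lambda>x. x \<le> a) (take (Suc k) xs)) \<le> length (filter (\<lambda>x. x \<le> a) xs)"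
    by (metis append_take_drop_id filter_append length_append le_add1)
  ultimately show "k < length (filter (\<lambda>x. x \<le> a) xs)" by simp
next
  assume "k < length (filter (\<lambda>x. x \<le> a) xs)"
  show "xs ! k \<le> a"
  proof (rule ccontr)
    assume "\<not> xs ! k \<le> a"
    then have "\<forall>x\<in>set (drop k xs). \<not> x \<le> a"
      using assms by (auto simp: in_set_conv_nth)
        (metis add.commute le_add1 less_diff_conv order_trans sorted_nth_mono)
    then have "filter (\<lambda>x. x \<le> a) xs = filter (\<lambda>x. x \<le> a) (take k xs)"
      by (metis append_Nil2 append_take_drop_id filter_False filter_append)
    then have "length (filter (\<lambda>x. x \<le> a) xs) \<le> k"
      using length_filter_le[of "\<lambda>x. x \<le> a" "take k xs"] by simp
    then show False
      using \<open>k < length (filter (\<lambda>x. x \<le> a) xs)\<close> by simp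
  qed
qed

lemma length_sorted_list_of_multiset: "length (sorted_list_of_multiset X) = size X"
  by (metis mset_sorted_list_of_multiset size_mset)

lemma size_filter_mset_eq_length_filter_sorted:
  "size (filter_mset P X) = length (filter P (sorted_list_of_multiset X))"
  by (metis mset_filter mset_sorted_list_of_multiset size_mset)

lemma quantile_rank_bounds:
  assumes "X \<noteq> {#}" "0 < p" "p \<le> 1"
  shows "1 \<le> nat \<lceil>p * real (size X)\<rceil>" "nat \<lceil>p * real (size X)\<rceil> \<le> size X"
proof -
  have "0 < size X" using assms(1) by (simp add: nonempty_has_size)
  then have "0 < p * real (size X)" "p * real (size X) \<le> real (size X)"
    using assms(2,3) by (simp_all add: mult_left_le_one_le)
  then show "1 \<le> nat \<lceil>p * real (size X)\<rceil>" "nat \<lceil>p * real (size X)\<rceil> \<le> size X"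
    by linarith+
qed

lemma emp_quantile_le_iff:
  assumes "X \<noteq> {#}" "0 < p" "p \<le> 1"
  shows "emp_quantile p X \<le> a \<longleftrightarrow> p * real (size X) \<le> real (size (filter_mset (\<lambda>x. x \<le> a) X))"
proof -
  define r where "r = nat \<lceil>p * real (size X)\<rceil>"
  define xs where "xs = sorted_list_of_multiset X"
  have r: "1 \<le> r" "r \<le> length xs"
    using quantile_rank_bounds[OF assms] unfolding r_def xs_def length_sorted_list_of_multiset .
  have "xs ! (r - 1) \<le> a \<longleftrightarrow> r - 1 < length (filter (\<lambda>x. x \<le> a) xs)"
    using r by (intro sorted_nth_le_iff_length_filter) (auto simp: xs_def)
  also have "\<dots> \<longleftrightarrow> r \<le> size (filter_mset (\<lambda>x. x \<le> a) X)"
    using r unfolding size_filter_mset_eq_length_filter_sorted xs_def by linarith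
  finally show ?thesis
    unfolding emp_quantile_def r_def xs_def by simp
qed

lemma emp_quantile_in:
  assumes "X \<noteq> {#}" "0 < p" "p \<le> 1"
  shows "emp_quantile p X \<in># X"
proof -
  have "nat \<lceil>p * real (size X)\<rceil> - 1 < length (sorted_list_of_multiset X)"
    using quantile_rank_bounds[OF assms] unfolding length_sorted_list_of_multiset by linarith
  then show ?thesis
    unfolding emp_quantile_def by (metis nth_mem set_sorted_list_of_multiset)
qed

lemma emp_quantile_mono:
  assumes "X \<noteq> {#}" "0 < p" "p \<le> p'" "p' \<le> 1"
  shows "emp_quantile p X \<le> emp_quantile p' X"
proof -
  have "p' * real (size X) \<le> real (size (filter_mset (\<lambda>x. x \<le> emp_quantile p' X) X))"
    using emp_quantile_le_iff[OF assms(1), of p' "emp_quantile p' X"] assms by simp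
  moreover have "p * real (size X) \<le> p' * real (size X)"
    using assms(3) by (simp add: mult_right_mono)
  ultimately show ?thesis
    using assms by (subst emp_quantile_le_iff) auto
qed

lemma ave_le_gap:
  assumes "\<forall>x\<in>#T. x \<le> hi" "x0 \<in># T" "x0 \<le> a"
  shows "ave T \<le> hi - (hi - a) / real (size T)"
proof -
  have T: "T = add_mset x0 (T - {#x0#})" using assms(2) by simp
  have "sum_mset (T - {#x0#}) \<le> real (size (T - {#x0#})) * hi"
    using assms(1) sum_mset_mono[of "T - {#x0#}" id "\<lambda>_. hi"] by (auto dest: in_diffD)
  then have "sum_mset T \<le> a + (real (size T) - 1) * hi"
    using assms(3) by (subst (1 2) T) (simp add: algebra_simps)
  then have "ave T \<le> (a + (real (size T) - 1) * hi) / real (size T)"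
    unfolding ave_def by (intro divide_right_mono) auto
  also have "\<dots> = hi - (hi - a) / real (size T)"
    by (subst (1 2 3) T) (simp add: field_simps)
  finally show ?thesis .
qed

lemma ave_ge_gap:
  assumes "\<forall>x\<in>#T. lo \<le> x" "x0 \<in># T" "a \<le> x0"
  shows "lo + (a - lo) / real (size T) \<le> ave T"
proof -
  have T: "T = add_mset x0 (T - {#x0#})" using assms(2) by simp
  have "real (size (T - {#x0#})) * lo \<le> sum_mset (T - {#x0#})"
    using assms(1) sum_mset_mono[of "T - {#x0#}" "\<lambda>_. lo" id] by (auto dest: in_diffD)
  then have "a + (real (size T) - 1) * lo \<le> sum_mset T"
    using assms(3) by (subst (1 2) T) (simp add: algebra_simps)
  have "lo + (a - lo) / real (size T) = (a + (real (size T) - 1) * lo) / real (size T)"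
    by (subst (1 2 3) T) (simp add: field_simps)
  also have "\<dots> \<le> ave T"
    unfolding ave_def using \<open>a + (real (size T) - 1) * lo \<le> sum_mset T\<close>
    by (intro divide_right_mono) auto
  finally show ?thesis .
qed

locale quarter_outliers =
  fixes X G :: "real multiset"
  assumes inliers_sub: "G \<subseteq># X"
    and few_outliers: "4 * (size X - size G) < size X"
begin

lemma X_nonempty: "X \<noteq> {#}"
  using few_outliers by auto

lemma inliers_gt_three_quarters: "3 * real (size X) < 4 * real (size G)"
  using few_outliers size_mset_mono[OF inliers_sub] by (simp add: of_nat_diff flip: of_nat_less_iff)

lemma size_filter_inliers_le: "size (filter_mset P G) \<le> size (filter_mset P X)"
  by (intro size_mset_mono multiset_filter_mono inliers_sub)

lemma size_filter_le_inliers: "size (filter_mset P X) \<le> size (filter_mset P G) + (size X - size G)"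
proof -
  have "X = G + (X - G)" using inliers_sub by (simp add: subset_mset.add_diff_inverse)
  then have "size (filter_mset P X) = size (filter_mset P G) + size (filter_mset P (X - G))"
    by (metis filter_union_mset size_union)
  moreover have "size (filter_mset P (X - G)) \<le> size X - size G"
    using inliers_sub by (metis size_Diff_submset size_filter_mset_lesseq)
  ultimately show ?thesis by linarith
qed

lemma lower_quartile_le:
  assumes "real (size X) < 4 * real (size (filter_mset (\<lambda>g. g \<le> a) G))"
  shows "emp_quantile 0.25 X \<le> a"
  using assms X_nonempty size_filter_inliers_le[of "\<lambda>g. g \<le> a"]
  by (subst emp_quantile_le_iff) auto

lemma upper_quartile_le:
  assumes "\<forall>g\<in>#G. g \<le> hi"
  shows "emp_quantile 0.75 X \<le> hi"
proof -
  have "filter_mset (\<lambda>g. g \<le> hi) G = G" using assms by (simp add: filter_mset_eq_conv)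
  then show ?thesis
    using X_nonempty size_filter_inliers_le[of "\<lambda>g. g \<le> hi"] inliers_gt_three_quarters
    by (subst emp_quantile_le_iff) auto
qed

lemma lower_quartile_ge:
  assumes "\<forall>g\<in>#G. lo \<le> g"
  shows "lo \<le> emp_quantile 0.25 X"
proof (rule ccontr)
  define q where "q = emp_quantile 0.25 X"
  define below where "below = size (filter_mset (\<lambda>x. x \<le> q) X)"
  assume "\<not> lo \<le> emp_quantile 0.25 X"
  then have no_inliers: "filter_mset (\<lambda>g. g \<le> q) G = {#}"
    using assms by (auto simp: filter_mset_eq_conv q_def)
  have "below + size G \<le> size X"
    using size_filter_le_inliers[of "\<lambda>x. x \<le> q"] size_mset_mono[OF inliers_sub]
    unfolding no_inliers below_def by simp
  then have "real below + real (size G) \<le> real (size X)"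
    by (simp only: of_nat_add[symmetric] of_nat_le_iff)
  moreover have "real (size X) \<le> 4 * real below"
    using emp_quantile_le_iff[OF X_nonempty, of "0.25" q] by (simp add: q_def below_def)
  ultimately show False
    using inliers_gt_three_quarters by linarith
qed

lemma upper_quartile_ge:
  assumes "real (size X) < 4 * real (size (filter_mset (\<lambda>g. a \<le> g) G))"
  shows "a \<le> emp_quantile 0.75 X"
proof (rule ccontr)
  define q where "q = emp_quantile 0.75 X"
  define below where "below = size (filter_mset (\<lambda>x. x \<le> q) X)"
  define above where "above = size (filter_mset (\<lambda>x. a \<le> x) X)"
  assume "\<not> a \<le> emp_quantile 0.75 X"
  then have "filter_mset (\<lambda>x. a \<le> x) X \<subseteq># filter_mset (\<lambda>x. \<not> x \<le> q) X"
    by (intro filter_mset_mono_strong) (auto simp: q_def)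
  then have "above \<le> size (filter_mset (\<lambda>x. \<not> x \<le> q) X)"
    unfolding above_def by (rule size_mset_mono)
  then have "below + above \<le> size X"
    unfolding below_def by (metis add_left_mono multiset_partition size_union)
  then have "real below + real above \<le> real (size X)"
    by (simp only: of_nat_add[symmetric] of_nat_le_iff)
  moreover have "3 * real (size X) \<le> 4 * real below"
    using emp_quantile_le_iff[OF X_nonempty, of "0.75" q] by (simp add: q_def below_def)
  moreover have "real (size (filter_mset (\<lambda>g. a \<le> g) G)) \<le> real above"
    unfolding above_def using size_filter_inliers_le by simp
  ultimately show False
    using assms by linarith
qed

lemma quartiles_in_trim25: "emp_quantile 0.25 X \<in># trim25 X" "emp_quantile 0.75 X \<in># trim25 X"
  using emp_quantile_in[OF X_nonempty] emp_quantile_mono[OF X_nonempty, of "0.25" "0.75"]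
  by (auto simp: trim25_def)

lemma size_trim25: "0 < size (trim25 X)" "size (trim25 X) \<le> size X"
  using quartiles_in_trim25(1) by (auto simp: nonempty_has_size[symmetric] trim25_def)

lemma ave_trim25_le_gap:
  assumes "\<forall>g\<in>#G. g \<le> hi" "a \<le> hi"
    and "real (size X) < 4 * real (size (filter_mset (\<lambda>g. g \<le> a) G))"
  shows "ave (trim25 X) \<le> hi - (hi - a) / real (size X)"
proof -
  have "\<forall>x\<in>#trim25 X. x \<le> hi"
    using upper_quartile_le[OF assms(1)] by (auto simp: trim25_def)
  then have "ave (trim25 X) \<le> hi - (hi - a) / real (size (trim25 X))"
    using quartiles_in_trim25(1) lower_quartile_le[OF assms(3)] by (rule ave_le_gap)
  moreover have "(hi - a) / real (size X) \<le> (hi - a) / real (size (trim25 X))"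
    using size_trim25 assms(2) by (intro divide_left_mono) auto
  ultimately show ?thesis by linarith
qed

lemma ave_trim25_ge_gap:
  assumes "\<forall>g\<in>#G. lo \<le> g" "lo \<le> a"
    and "real (size X) < 4 * real (size (filter_mset (\<lambda>g. a \<le> g) G))"
  shows "lo + (a - lo) / real (size X) \<le> ave (trim25 X)"
proof -
  have "\<forall>x\<in>#trim25 X. lo \<le> x"
    using lower_quartile_ge[OF assms(1)] by (auto simp: trim25_def)
  then have "lo + (a - lo) / real (size (trim25 X)) \<le> ave (trim25 X)"
    using quartiles_in_trim25(2) upper_quartile_ge[OF assms(3)] by (rule ave_ge_gap)
  moreover have "(a - lo) / real (size X) \<le> (a - lo) / real (size (trim25 X))"
    using size_trim25 assms(2) by (intro divide_left_mono) auto
  ultimately show ?thesis by linarith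
qed

lemma ave_trim25_le:
  assumes "\<forall>g\<in>#G. g \<le> hi"
  shows "ave (trim25 X) \<le> hi"
proof -
  have "filter_mset (\<lambda>g. g \<le> hi) G = G" using assms by (simp add: filter_mset_eq_conv)
  then show ?thesis
    using ave_trim25_le_gap[OF assms order_refl] inliers_gt_three_quarters by simp
qed

lemma ave_trim25_ge:
  assumes "\<forall>g\<in>#G. lo \<le> g"
  shows "lo \<le> ave (trim25 X)"
proof -
  have "filter_mset (\<lambda>g. lo \<le> g) G = G" using assms by (simp add: filter_mset_eq_conv)
  then show ?thesis
    using ave_trim25_ge_gap[OF assms order_refl] inliers_gt_three_quarters by simp
qed

end

lemma visit_within_round:
  fixes n s j :: nat
  assumes "j < n"
  shows "\<exists>u. s \<le> u \<and> u < s + n \<and> u mod n = j"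
proof -
  define q r where "q = s div n" and "r = s mod n"
  have s: "s = n * q + r" and "r < n"
    using assms unfolding q_def r_def by simp_all
  show ?thesis
  proof (cases "r \<le> j")
    case True
    then show ?thesis
      using s assms by (intro exI[of _ "j + n * q"]) auto
  next
    case False
    have "(j + n * Suc q) mod n = j"
      using assms by (simp only: mod_mult_self2 mod_less)
    then show ?thesis
      using False s \<open>r < n\<close> by (intro exI[of _ "j + n * Suc q"]) auto
  qed
qed

locale sweep_dynamics =
  fixes n :: nat and \<eta> :: real and N :: "nat \<Rightarrow> nat set" and \<theta> :: "nat \<Rightarrow> nat \<Rightarrow> real"
  assumes n_pos: "0 < n" and eta: "0 < \<eta>" "\<eta> < 1"
    and nbhd_sub: "\<And>j. N j \<subseteq> {..<n}"
    and expansion: "\<And>J. J \<subseteq> {..<n} \<Longrightarrow> J \<noteq> {} \<Longrightarrow> real (card J) \<le> real n / 2 \<Longrightarrow>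
      \<exists>j\<in>J. card (N j \<inter> J) < card (N j \<inter> ({..<n} - J))"
    and step_le_convex: "\<And>t M. \<forall>k<n. \<theta> t k \<le> M \<Longrightarrow>
      \<forall>j<n. \<theta> (Suc t) j \<le> (1 - \<eta>) * \<theta> t j + \<eta> * M"
    and step_le_pulled: "\<And>t M d. \<forall>k<n. \<theta> t k \<le> M \<Longrightarrow> 0 \<le> d \<Longrightarrow>
      card (N (t mod n)) < 2 * card {k\<in>N (t mod n). \<theta> t k \<le> M - d} \<Longrightarrow>
      \<theta> (Suc t) (t mod n) \<le> M - \<eta> * d / real n"
begin

definition above :: "nat \<Rightarrow> real \<Rightarrow> nat set" where
  "above t a = {j. j < n \<and> a < \<theta> t j}"

text \<open>A gap d below the maximum survives a round as (1 - eta)^n d; a pulled vertex gains eta/n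
  times that, which in turn must survive the rest of the round.\<close>
definition rate :: real where
  "rate = \<eta> * (1 - \<eta>) ^ (2 * n) / real n"

lemma rate_pos: "0 < rate"
  unfolding rate_def using eta n_pos by simp

lemma rate_le: "rate \<le> (1 - \<eta>) ^ n"
proof -
  have "rate = (\<eta> / real n) * (1 - \<eta>) ^ n * (1 - \<eta>) ^ n"
    unfolding rate_def by (simp add: power_add[symmetric] mult_2)
  also have "\<dots> \<le> 1 * 1 * (1 - \<eta>) ^ n"
    using eta n_pos by (intro mult_right_mono mult_mono power_le_one) auto
  finally show ?thesis by simp
qed

lemma finite_above: "finite (above t a)"
  unfolding above_def by simp

lemma upper_bound_preserved:
  assumes "\<forall>k<n. \<theta> t k \<le> M"
  shows "\<forall>k<n. \<theta> (t + s) k \<le> M"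
proof (induction s)
  case (Suc s)
  have "\<theta> (Suc (t + s)) k \<le> M" if "k < n" for k
  proof -
    have "\<theta> (Suc (t + s)) k \<le> (1 - \<eta>) * \<theta> (t + s) k + \<eta> * M"
      using step_le_convex[OF Suc] that by blast
    also have "\<dots> \<le> (1 - \<eta>) * M + \<eta> * M"
      using Suc that eta by (intro add_right_mono mult_left_mono) auto
    finally show ?thesis by (simp add: algebra_simps)
  qed
  then show ?case by simp
qed (use assms in simp)

lemma gap_decay:
  assumes "\<forall>k<n. \<theta> t k \<le> M" "j < n" "\<theta> t j \<le> M - \<delta>"
  shows "\<theta> (t + s) j \<le> M - (1 - \<eta>) ^ s * \<delta>"
proof (induction s)
  case (Suc s)
  have "\<theta> (Suc (t + s)) j \<le> (1 - \<eta>) * \<theta> (t + s) j + \<eta> * M"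
    using step_le_convex[OF upper_bound_preserved[OF assms(1)]] assms(2) by blast
  also have "\<dots> \<le> (1 - \<eta>) * (M - (1 - \<eta>) ^ s * \<delta>) + \<eta> * M"
    using Suc eta by (intro add_right_mono mult_left_mono) auto
  finally show ?case by (simp add: algebra_simps)
qed (use assms in simp)

lemma gap_decay_round:
  assumes "\<forall>k<n. \<theta> t k \<le> M" "j < n" "\<theta> t j \<le> M - \<delta>" "0 \<le> \<delta>" "s \<le> n"
  shows "\<theta> (t + s) j \<le> M - (1 - \<eta>) ^ n * \<delta>"
proof -
  have "(1 - \<eta>) ^ n * \<delta> \<le> (1 - \<eta>) ^ s * \<delta>"
    using eta assms(4,5) by (intro mult_right_mono power_decreasing) auto
  then show ?thesis
    using gap_decay[OF assms(1-3), of s] by linarith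
qed

lemma above_round_subset:
  assumes "\<forall>k<n. \<theta> s k \<le> M" "0 \<le> \<delta>"
  shows "above (s + n) (M - rate * \<delta>) \<subseteq> above s (M - \<delta>)"
proof
  fix k assume k: "k \<in> above (s + n) (M - rate * \<delta>)"
  show "k \<in> above s (M - \<delta>)"
  proof (rule ccontr)
    assume "k \<notin> above s (M - \<delta>)"
    then have "\<theta> (s + n) k \<le> M - (1 - \<eta>) ^ n * \<delta>"
      using k assms by (intro gap_decay_round) (auto simp: above_def)
    moreover have "rate * \<delta> \<le> (1 - \<eta>) ^ n * \<delta>"
      using rate_le assms(2) by (rule mult_right_mono)
    ultimately show False
      using k by (auto simp: above_def)
  qed
qed

lemma expanding_vertex_drops:
  assumes bound: "\<forall>k<n. \<theta> s k \<le> M" and "0 \<le> \<delta>" "j < n"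
    and expanding: "card (N j \<inter> above s (M - \<delta>)) < card (N j \<inter> ({..<n} - above s (M - \<delta>)))"
  shows "\<theta> (s + n) j \<le> M - rate * \<delta>"
proof -
  obtain u where u: "s \<le> u" "u < s + n" "u mod n = j"
    using visit_within_round[OF \<open>j < n\<close>] by blast
  define d where "d = (1 - \<eta>) ^ n * \<delta>"
  have "0 \<le> d" unfolding d_def using eta \<open>0 \<le> \<delta>\<close> by simp
  have bound_u: "\<forall>k<n. \<theta> u k \<le> M"
    using upper_bound_preserved[OF bound, of "u - s"] u by simp
  have "N j \<inter> ({..<n} - above s (M - \<delta>)) \<subseteq> {k\<in>N j. \<theta> u k \<le> M - d}"
  proof
    fix k assume "k \<in> N j \<inter> ({..<n} - above s (M - \<delta>))"
    then have k: "k \<in> N j" "k < n" "\<theta> s k \<le> M - \<delta>"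
      by (auto simp: above_def)
    have "\<theta> (s + (u - s)) k \<le> M - d"
      unfolding d_def using u by (intro gap_decay_round[OF bound k(2,3) \<open>0 \<le> \<delta>\<close>]) simp
    then show "k \<in> {k\<in>N j. \<theta> u k \<le> M - d}" using u k by simp
  qed
  moreover have "finite (N j)" using nbhd_sub finite_subset by blast
  ultimately have "card (N j \<inter> ({..<n} - above s (M - \<delta>))) \<le> card {k\<in>N j. \<theta> u k \<le> M - d}"
    by (intro card_mono) auto
  moreover have "card (N j) = card (N j \<inter> above s (M - \<delta>)) + card (N j \<inter> ({..<n} - above s (M - \<delta>)))"
  proof -
    have "N j = (N j \<inter> above s (M - \<delta>)) \<union> (N j \<inter> ({..<n} - above s (M - \<delta>)))"
      using nbhd_sub[of j] by auto
    then show ?thesis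
      using \<open>finite (N j)\<close> by (metis Diff_disjoint Int_Diff card_Un_disjoint finite_Int inf_commute)
  qed
  ultimately have "card (N j) < 2 * card {k\<in>N j. \<theta> u k \<le> M - d}"
    using expanding by linarith
  then have "\<theta> (Suc u) j \<le> M - \<eta> * d / real n"
    using step_le_pulled[OF bound_u \<open>0 \<le> d\<close>] u(3) by simp
  moreover have "\<forall>k<n. \<theta> (Suc u) k \<le> M"
    using upper_bound_preserved[OF bound_u, of 1] by simp
  ultimately have "\<theta> (Suc u + (s + n - Suc u)) j \<le> M - (1 - \<eta>) ^ n * (\<eta> * d / real n)"
    using \<open>j < n\<close> \<open>0 \<le> d\<close> eta u by (intro gap_decay_round) auto
  moreover have "(1 - \<eta>) ^ n * (\<eta> * d / real n) = rate * \<delta>"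
    unfolding rate_def d_def by (simp add: power_add[symmetric] mult_2)
  ultimately show ?thesis using u by simp
qed

lemma round_shrinks_above:
  assumes "\<forall>k<n. \<theta> s k \<le> M" "0 \<le> \<delta>"
    and "above s (M - \<delta>) \<noteq> {}" "real (card (above s (M - \<delta>))) \<le> real n / 2"
  shows "card (above (s + n) (M - rate * \<delta>)) < card (above s (M - \<delta>))"
proof -
  obtain j where j: "j \<in> above s (M - \<delta>)"
    "card (N j \<inter> above s (M - \<delta>)) < card (N j \<inter> ({..<n} - above s (M - \<delta>)))"
    using expansion[of "above s (M - \<delta>)"] assms(3,4) by (auto simp: above_def)
  then have "\<theta> (s + n) j \<le> M - rate * \<delta>"
    using expanding_vertex_drops[OF assms(1,2)] by (simp add: above_def)
  then have "j \<notin> above (s + n) (M - rate * \<delta>)"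
    by (simp add: above_def)
  then have "above (s + n) (M - rate * \<delta>) \<subset> above s (M - \<delta>)"
    using above_round_subset[OF assms(1,2)] j(1) by blast
  then show ?thesis
    by (intro psubset_card_mono finite_above)
qed

lemma rounds_lower_max:
  assumes bound: "\<forall>k<n. \<theta> t k \<le> M" and "a \<le> M"
    and half: "real (card (above t a)) \<le> real n / 2"
  shows "\<forall>k<n. \<theta> (t + n * n) k \<le> M - rate ^ n * (M - a)"
proof -
  have shrink: "card (above (t + i * n) (M - rate ^ i * (M - a))) \<le> card (above t a) - i" for i
  proof (induction i)
    case (Suc i)
    let ?A = "above (t + i * n) (M - rate ^ i * (M - a))"
    have bound_i: "\<forall>k<n. \<theta> (t + i * n) k \<le> M"
      using upper_bound_preserved[OF bound] by blast
    have gap: "0 \<le> rate ^ i * (M - a)"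
      using rate_pos \<open>a \<le> M\<close> by simp
    have "card (above (t + i * n + n) (M - rate * (rate ^ i * (M - a)))) \<le> card ?A - 1"
    proof (cases "?A = {}")
      case True
      then show ?thesis
        using above_round_subset[OF bound_i gap] by auto
    next
      case False
      have "real (card ?A) \<le> real n / 2"
        using Suc half by linarith
      then show ?thesis
        using round_shrinks_above[OF bound_i gap False] by linarith
    qed
    then show ?case
      using Suc by (simp add: algebra_simps)
  qed simp
  have "card (above t a) \<le> n"
    unfolding above_def by (rule order_trans[OF card_mono[of "{..<n}"]]) auto
  then have "above (t + n * n) (M - rate ^ n * (M - a)) = {}"
    using shrink[of n] finite_above by (simp add: mult.commute)
  then show ?thesis
    unfolding above_def by (metis (mono_tags, lifting) empty_Collect_eq not_le)
qed

end

locale two_sided_sweep =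
  upper: sweep_dynamics n \<eta> N \<theta> + lower: sweep_dynamics n \<eta> N "\<lambda>t j. - \<theta> t j"
  for n \<eta> N \<theta>
begin

definition spread :: "nat \<Rightarrow> real" where
  "spread t = Max (\<theta> t ` {..<n}) - Min (\<theta> t ` {..<n})"

definition contraction :: real where
  "contraction = 1 - upper.rate ^ n / 2"

lemma contraction_bounds: "0 < contraction" "contraction < 1"
proof -
  have "upper.rate \<le> 1"
    using upper.rate_le upper.eta power_le_one[of "1 - \<eta>" n] by linarith
  then have "0 < upper.rate ^ n" "upper.rate ^ n \<le> 1"
    using upper.rate_pos by (simp_all add: power_le_one)
  then show "0 < contraction" "contraction < 1"
    unfolding contraction_def by linarith+
qed

lemma between_extremes: "\<forall>k<n. Min (\<theta> t ` {..<n}) \<le> \<theta> t k \<and> \<theta> t k \<le> Max (\<theta> t ` {..<n})"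
  by simp

lemma spread_le:
  assumes "\<forall>k<n. L \<le> \<theta> t k \<and> \<theta> t k \<le> M"
  shows "spread t \<le> M - L"
proof -
  have "Max (\<theta> t ` {..<n}) \<le> M" "L \<le> Min (\<theta> t ` {..<n})"
    using assms upper.n_pos by (auto intro!: Max.boundedI Min.boundedI)
  then show ?thesis
    unfolding spread_def by linarith
qed

lemma bounds_preserved:
  assumes "\<forall>k<n. L \<le> \<theta> t k \<and> \<theta> t k \<le> M"
  shows "\<forall>k<n. L \<le> \<theta> (t + s) k \<and> \<theta> (t + s) k \<le> M"
  using upper.upper_bound_preserved[of t M s] lower.upper_bound_preserved[of t "- L" s] assms
  by auto

lemma spread_non_increasing: "spread (t + s) \<le> spread t"
  using bounds_preserved[OF between_extremes] unfolding spread_def[of t] by (rule spread_le)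

lemma spread_contracts: "spread (t + n * n) \<le> contraction * spread t"
proof -
  define L M where "L = Min (\<theta> t ` {..<n})" and "M = Max (\<theta> t ` {..<n})"
  define mid where "mid = (M + L) / 2"
  have bounds: "\<forall>k<n. L \<le> \<theta> t k \<and> \<theta> t k \<le> M"
    unfolding L_def M_def by (rule between_extremes)
  then have "L \<le> M" using upper.n_pos by force
  have shrunk: "M - upper.rate ^ n * (M - mid) - L = contraction * spread t"
    "M - (L + upper.rate ^ n * (mid - L)) = contraction * spread t"
    unfolding contraction_def mid_def spread_def L_def[symmetric] M_def[symmetric]
    by (simp_all add: field_simps)
  have bounds': "\<forall>k<n. L \<le> \<theta> (t + n * n) k \<and> \<theta> (t + n * n) k \<le> M"
    using bounds_preserved[OF bounds] by blast
  have "upper.above t mid \<inter> lower.above t (- mid) = {}"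
    "upper.above t mid \<union> lower.above t (- mid) \<subseteq> {..<n}"
    by (auto simp: upper.above_def lower.above_def)
  then have "card (upper.above t mid) + card (lower.above t (- mid)) \<le> card {..<n}"
    by (metis card_Un_disjoint card_mono finite_lessThan upper.finite_above lower.finite_above)
  then consider "real (card (upper.above t mid)) \<le> real n / 2"
    | "real (card (lower.above t (- mid))) \<le> real n / 2"
    by (simp only: card_lessThan) linarith
  then show ?thesis
  proof cases
    case 1
    have "\<forall>k<n. \<theta> t k \<le> M" "mid \<le> M"
      using bounds \<open>L \<le> M\<close> by (auto simp: mid_def)
    then have "\<forall>k<n. \<theta> (t + n * n) k \<le> M - upper.rate ^ n * (M - mid)"
      using upper.rounds_lower_max 1 by blast
    then have "\<forall>k<n. L \<le> \<theta> (t + n * n) k \<and> \<theta> (t + n * n) k \<le> M - upper.rate ^ n * (M - mid)"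
      using bounds' by simp
    then show ?thesis
      using spread_le shrunk(1) by fastforce
  next
    case 2
    have "\<forall>k<n. - \<theta> t k \<le> - L" "- mid \<le> - L"
      using bounds \<open>L \<le> M\<close> by (auto simp: mid_def)
    then have "\<forall>k<n. - \<theta> (t + n * n) k \<le> - L - upper.rate ^ n * (- L - - mid)"
      using lower.rounds_lower_max 2 by blast
    then have "\<forall>k<n. L + upper.rate ^ n * (mid - L) \<le> \<theta> (t + n * n) k"
      by (simp add: algebra_simps)
    then have "\<forall>k<n. L + upper.rate ^ n * (mid - L) \<le> \<theta> (t + n * n) k \<and> \<theta> (t + n * n) k \<le> M"
      using bounds' by simp
    then show ?thesis
      using spread_le shrunk(2) by fastforce
  qed
qed

lemma spread_geometric: "spread t \<le> contraction ^ (t div (n * n)) * spread 0"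
proof -
  have rounds: "spread (i * (n * n)) \<le> contraction ^ i * spread 0" for i
  proof (induction i)
    case (Suc i)
    have "spread (i * (n * n) + n * n) \<le> contraction * spread (i * (n * n))"
      by (rule spread_contracts)
    also have "\<dots> \<le> contraction * (contraction ^ i * spread 0)"
      using Suc contraction_bounds by (intro mult_left_mono) auto
    finally show ?case
      by (simp add: add.commute)
  qed simp
  have "spread t \<le> spread (t div (n * n) * (n * n))"
    using spread_non_increasing[of "t div (n * n) * (n * n)" "t mod (n * n)"]
    by (simp only: div_mult_mod_eq)
  also have "\<dots> \<le> contraction ^ (t div (n * n)) * spread 0"
    by (rule rounds)
  finally show ?thesis .
qed

end

lemma cis_Arg_unit: "cmod u = 1 \<Longrightarrow> cis (Arg u) = u"
  using cis_Arg[of u] by (cases "u = 0") (auto simp: sgn_div_norm)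

lemma Arg_cis_abs_less: "\<bar>x\<bar> < pi \<Longrightarrow> Arg (cis x) = x"
  by (intro Arg_cis) auto

lemma damped_step_le:
  fixes \<eta> \<theta> a M :: real
  assumes "0 \<le> \<eta>" "a \<le> M - \<theta>"
  shows "\<theta> + \<eta> * a \<le> (1 - \<eta>) * \<theta> + \<eta> * M"
  using mult_left_mono[OF assms(2,1)] by (simp add: algebra_simps)

lemma damped_step_ge:
  fixes \<eta> \<theta> a L :: real
  assumes "0 \<le> \<eta>" "L - \<theta> \<le> a"
  shows "(1 - \<eta>) * \<theta> + \<eta> * L \<le> \<theta> + \<eta> * a"
  using mult_left_mono[OF assms(2,1)] by (simp add: algebra_simps)

lemma power_div_le_root_power:
  fixes \<kappa> :: real and N t :: nat
  assumes "0 < \<kappa>" "\<kappa> < 1" "0 < N"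
  shows "\<kappa> ^ (t div N) \<le> (1 / \<kappa>) * (\<kappa> powr (1 / real N)) ^ t"
proof -
  have root_power: "(\<kappa> powr (1 / real N)) ^ t = \<kappa> powr (real t / real N)"
    using assms by (simp add: powr_realpow[symmetric] powr_powr)
  have "real t = real N * real (t div N) + real (t mod N)"
    by (metis div_mult_mod_eq of_nat_add of_nat_mult mult.commute)
  moreover have "real (t mod N) < real N" using assms(3) by simp
  ultimately have "real t / real N \<le> real (t div N) + 1"
    using assms(3) by (simp add: divide_le_eq algebra_simps)
  then have "\<kappa> powr (real (t div N) + 1) \<le> \<kappa> powr (real t / real N)"
    using assms by (intro powr_mono') auto
  moreover have "\<kappa> powr (real (t div N) + 1) = \<kappa> ^ (t div N) * \<kappa>"
    using assms by (simp add: powr_add powr_realpow)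
  ultimately show ?thesis
    using assms by (simp add: root_power field_simps)
qed

lemma delta_eq_Max_image:
  "delta E zs z = Max (insert 0 ((\<lambda>(j, k). d_ang (cnj (zs j) * z j) (cnj (zs k) * z k)) ` E))"
  unfolding delta_def by (rule arg_cong[where f = "\<lambda>A. Max (insert 0 A)"]) auto

lemma delta_nonneg: "finite E \<Longrightarrow> 0 \<le> delta E zs z"
  unfolding delta_eq_Max_image by (intro Max_ge) auto

locale trimmed_sync =
  fixes n :: nat and E Eg Eb :: "(nat \<times> nat) set"
    and zs :: "nat \<Rightarrow> complex" and zobs :: "nat \<Rightarrow> nat \<Rightarrow> complex"
    and z :: "nat \<Rightarrow> nat \<Rightarrow> complex" and \<eta> :: real and c :: complex
  assumes n_pos: "0 < n"
    and graph: "E \<subseteq> {..<n} \<times> {..<n}"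
    and split: "E = Eg \<union> Eb" "Eg \<inter> Eb = {}"
    and zs_unit: "\<forall>j<n. cmod (zs j) = 1"
    and obs_good: "\<forall>(j, k) \<in> Eg. zobs j k = zs j * cnj (zs k)"
    and alpha0: "\<forall>j<n. real (card (nbhd Eb j)) / real (card (nbhd E j)) < 1 / 4"
    and init_unit: "\<forall>j<n. cmod (z 0 j) = 1"
    and c_unit: "cmod c = 1"
    and init_c: "\<forall>j<n. d_ang c (cnj (zs j) * z 0 j) < pi / 2"
    and eta: "0 < \<eta>" "\<eta> < 1"
    and step_j: "\<forall>t. z (Suc t) (t mod n) = tas_update \<eta> E zobs (z t) (t mod n)"
    and step_other: "\<forall>t. \<forall>k<n. k \<noteq> t mod n \<longrightarrow> z (Suc t) k = z t k"
begin

definition angle :: "nat \<Rightarrow> nat \<Rightarrow> real" where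
  "angle t j = Arg (cnj (zs j) * z t j * cnj c)"

definition radius :: real where
  "radius = Max ((\<lambda>j. \<bar>angle 0 j\<bar>) ` {..<n})"

definition log_obs :: "nat \<Rightarrow> nat \<Rightarrow> real multiset" where
  "log_obs t j = image_mset (\<lambda>k. Log_c (z t j) (zobs j k * z t k)) (mset_set (nbhd E j))"

definition good_diffs :: "nat \<Rightarrow> nat \<Rightarrow> real multiset" where
  "good_diffs t j = image_mset (\<lambda>k. angle t k - angle t j) (mset_set (nbhd Eg j))"

abbreviation trimmed_mean :: "nat \<Rightarrow> nat \<Rightarrow> real" where
  "trimmed_mean t j \<equiv> ave (trim25 (log_obs t j))"

lemma nbhd_sub: "nbhd E j \<subseteq> {..<n}"
  using graph unfolding nbhd_def by auto

lemma nbhd_split: "nbhd E j = nbhd Eg j \<union> nbhd Eb j" "nbhd Eg j \<inter> nbhd Eb j = {}"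
  using split unfolding nbhd_def by auto

lemma good_neighbour_less: "k \<in> nbhd Eg j \<Longrightarrow> k < n"
  using nbhd_split nbhd_sub by blast

lemma finite_nbhd: "finite (nbhd E j)" "finite (nbhd Eg j)" "finite (nbhd Eb j)"
  using nbhd_sub nbhd_split finite_subset by (metis finite_Un finite_lessThan)+

lemma card_nbhd_split: "card (nbhd E j) = card (nbhd Eg j) + card (nbhd Eb j)"
  using nbhd_split finite_nbhd by (metis card_Un_disjoint)

lemma card_nbhd_le: "card (nbhd E j) \<le> n"
  using card_mono[OF _ nbhd_sub] by (metis card_lessThan finite_lessThan)

lemma few_bad_neighbours:
  assumes "j < n" "nbhd E j \<noteq> {}"
  shows "4 * card (nbhd Eb j) < card (nbhd E j)"
proof -
  have "0 < real (card (nbhd E j))"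
    using assms(2) finite_nbhd by (simp add: card_gt_0_iff)
  moreover have "real (card (nbhd Eb j)) / real (card (nbhd E j)) < 1 / 4"
    using alpha0 assms(1) by blast
  ultimately have "4 * real (card (nbhd Eb j)) < real (card (nbhd E j))"
    by (simp add: divide_less_eq)
  then show ?thesis by linarith
qed

lemma majority_good_neighbours:
  assumes "j < n" "card (nbhd E j) < 2 * card {k\<in>nbhd E j. P k}"
  shows "card (nbhd E j) < 4 * card {k\<in>nbhd Eg j. P k}"
proof -
  have "card {k\<in>nbhd E j. P k} \<le> card ({k\<in>nbhd Eg j. P k} \<union> nbhd Eb j)"
    using nbhd_split finite_nbhd by (intro card_mono) auto
  also have "\<dots> \<le> card {k\<in>nbhd Eg j. P k} + card (nbhd Eb j)"
    by (rule card_Un_le)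
  finally have "card {k\<in>nbhd E j. P k} \<le> card {k\<in>nbhd Eg j. P k} + card (nbhd Eb j)" .
  moreover have "4 * card (nbhd Eb j) < card (nbhd E j)"
    using few_bad_neighbours assms by force
  ultimately show ?thesis
    using assms(2) by linarith
qed

text \<open>At an isolated vertex the trimmed mean is the junk value ave {#} = 0 / 0 = 0.\<close>
lemma trimmed_mean_isolated: "nbhd E j = {} \<Longrightarrow> trimmed_mean t j = 0"
  by (simp add: log_obs_def trim25_def ave_def)

lemma z_next: "z (Suc t) (t mod n) = cis (\<eta> * trimmed_mean t (t mod n)) * z t (t mod n)"
  using step_j by (simp add: tas_update_def Exp_c_def log_obs_def)

lemma angle_other: "k < n \<Longrightarrow> k \<noteq> t mod n \<Longrightarrow> angle (Suc t) k = angle t k"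
  unfolding angle_def using step_other by simp

lemma z_unit: "j < n \<Longrightarrow> cmod (z t j) = 1"
proof (induction t arbitrary: j)
  case 0
  then show ?case using init_unit by simp
next
  case (Suc t)
  then show ?case
    using z_next step_other by (cases "j = t mod n") (simp_all add: norm_mult)
qed

lemma cis_angle: "j < n \<Longrightarrow> cis (angle t j) = cnj (zs j) * z t j * cnj c"
  unfolding angle_def using z_unit zs_unit c_unit by (intro cis_Arg_unit) (simp add: norm_mult)

lemma cis_angle_diff:
  assumes "j < n" "k < n"
  shows "cis (angle t k - angle t j) = (cnj (zs k) * z t k) * cnj (cnj (zs j) * z t j)"
proof -
  have "c * cnj c = 1"
    using c_unit by (metis complex_norm_square of_real_1 power_one)
  then have "(cnj (zs k) * z t k) * cnj (cnj (zs j) * z t j)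
      = (cnj (zs k) * z t k * cnj c) * cnj (cnj (zs j) * z t j * cnj c)"
    by (simp add: algebra_simps)
  also have "\<dots> = cis (angle t k) * cnj (cis (angle t j))"
    using assms by (simp only: cis_angle)
  also have "\<dots> = cis (angle t k - angle t j)"
    by (simp add: cis_cnj cis_mult)
  finally show ?thesis ..
qed

lemma angle_init: "j < n \<Longrightarrow> \<bar>angle 0 j\<bar> < pi / 2"
proof -
  assume "j < n"
  define v where "v = c * cnj (cnj (zs j) * z 0 j)"
  have "\<bar>Arg v\<bar> < pi / 2"
    using init_c \<open>j < n\<close> unfolding d_ang_def v_def by simp
  moreover have "cnj (zs j) * z 0 j * cnj c = cnj v"
    unfolding v_def by simp
  ultimately show ?thesis
    unfolding angle_def by (simp add: Arg_cnj)
qed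

lemma angle_0_le_radius: "j < n \<Longrightarrow> \<bar>angle 0 j\<bar> \<le> radius"
  unfolding radius_def by (intro Max_ge) auto

lemma radius: "0 \<le> radius" "radius < pi / 2"
proof -
  show "0 \<le> radius"
    using angle_0_le_radius[OF n_pos] by linarith
  show "radius < pi / 2"
    unfolding radius_def using n_pos angle_init by (subst Max_less_iff) auto
qed

text \<open>Under this invariant all angle differences lie in (-pi, pi), where Arg inverts cis.\<close>
context
  fixes t :: nat
  assumes bounded: "\<forall>k<n. \<bar>angle t k\<bar> \<le> radius"
begin

lemma angle_diff_lt_pi:
  assumes "j < n" "k < n"
  shows "\<bar>angle t k - angle t j\<bar> < pi"
proof -
  have "\<bar>angle t k\<bar> \<le> radius" "\<bar>angle t j\<bar> \<le> radius"
    using bounded assms by blast+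
  then show ?thesis
    using radius by linarith
qed

lemma log_obs_good:
  assumes "k \<in> nbhd Eg (t mod n)"
  shows "Log_c (z t (t mod n)) (zobs (t mod n) k * z t k) = angle t k - angle t (t mod n)"
proof -
  have k: "k < n" "t mod n < n"
    using good_neighbour_less[OF assms] n_pos by auto
  have "zobs (t mod n) k = zs (t mod n) * cnj (zs k)"
    using obs_good assms by (auto simp: nbhd_def)
  then have "zobs (t mod n) k * z t k * cnj (z t (t mod n)) = cis (angle t k - angle t (t mod n))"
    using k by (simp add: cis_angle_diff algebra_simps)
  moreover have "\<bar>angle t k - angle t (t mod n)\<bar> < pi"
    using angle_diff_lt_pi k by blast
  ultimately show ?thesis
    unfolding Log_c_def by (simp add: Arg_cis_abs_less)
qed

lemma good_diffs_subset: "good_diffs t (t mod n) \<subseteq># log_obs t (t mod n)"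
proof -
  have "mset_set (nbhd E (t mod n)) = mset_set (nbhd Eg (t mod n)) + mset_set (nbhd Eb (t mod n))"
    using nbhd_split finite_nbhd by (simp add: mset_set_Union)
  moreover have "image_mset (\<lambda>k. Log_c (z t (t mod n)) (zobs (t mod n) k * z t k))
      (mset_set (nbhd Eg (t mod n))) = good_diffs t (t mod n)"
    unfolding good_diffs_def using log_obs_good finite_nbhd by (intro image_mset_cong) auto
  ultimately show ?thesis
    unfolding log_obs_def by simp
qed

lemma quarter_outliers_log_obs:
  assumes "nbhd E (t mod n) \<noteq> {}"
  shows "quarter_outliers (log_obs t (t mod n)) (good_diffs t (t mod n))"
  using good_diffs_subset few_bad_neighbours[OF _ assms] n_pos card_nbhd_split
  by unfold_locales (auto simp: log_obs_def good_diffs_def)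

lemma trimmed_mean_le:
  assumes "\<forall>k<n. angle t k \<le> M"
  shows "trimmed_mean t (t mod n) \<le> M - angle t (t mod n)"
proof (cases "nbhd E (t mod n) = {}")
  case True
  then show ?thesis
    using assms n_pos by (simp add: trimmed_mean_isolated)
next
  case False
  interpret quarter_outliers "log_obs t (t mod n)" "good_diffs t (t mod n)"
    using quarter_outliers_log_obs[OF False] .
  show ?thesis
    using assms good_neighbour_less finite_nbhd
    by (intro ave_trim25_le) (auto simp: good_diffs_def)
qed

lemma trimmed_mean_ge:
  assumes "\<forall>k<n. L \<le> angle t k"
  shows "L - angle t (t mod n) \<le> trimmed_mean t (t mod n)"
proof (cases "nbhd E (t mod n) = {}")
  case True
  then show ?thesis
    using assms n_pos by (simp add: trimmed_mean_isolated)
next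
  case False
  interpret quarter_outliers "log_obs t (t mod n)" "good_diffs t (t mod n)"
    using quarter_outliers_log_obs[OF False] .
  show ?thesis
    using assms good_neighbour_less finite_nbhd
    by (intro ave_trim25_ge) (auto simp: good_diffs_def)
qed

lemma trimmed_mean_le_gap:
  assumes upper: "\<forall>k<n. angle t k \<le> M" and "0 \<le> d"
    and pulled: "card (nbhd E (t mod n)) < 2 * card {k\<in>nbhd E (t mod n). angle t k \<le> M - d}"
  shows "trimmed_mean t (t mod n) \<le> M - angle t (t mod n) - d / real n"
proof -
  let ?j = "t mod n"
  have "nbhd E ?j \<noteq> {}" using pulled by auto
  interpret quarter_outliers "log_obs t ?j" "good_diffs t ?j"
    using quarter_outliers_log_obs[OF \<open>nbhd E ?j \<noteq> {}\<close>] .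
  have "size (filter_mset (\<lambda>x. x \<le> M - d - angle t ?j) (good_diffs t ?j))
      = card {k\<in>nbhd Eg ?j. angle t k \<le> M - d}"
    unfolding good_diffs_def using finite_nbhd by (simp add: filter_mset_image_mset)
  moreover have "card (nbhd E ?j) < 4 * card {k\<in>nbhd Eg ?j. angle t k \<le> M - d}"
    using majority_good_neighbours pulled n_pos by simp
  ultimately have "real (size (log_obs t ?j))
      < 4 * real (size (filter_mset (\<lambda>x. x \<le> M - d - angle t ?j) (good_diffs t ?j)))"
    unfolding log_obs_def by simp
  then have "trimmed_mean t ?j \<le> M - angle t ?j - d / real (card (nbhd E ?j))"
    using ave_trim25_le_gap[of "M - angle t ?j" "M - d - angle t ?j"] upper good_neighbour_less
      finite_nbhd \<open>0 \<le> d\<close> by (auto simp: good_diffs_def log_obs_def)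
  moreover have "d / real n \<le> d / real (card (nbhd E ?j))"
    using \<open>0 \<le> d\<close> \<open>nbhd E ?j \<noteq> {}\<close> finite_nbhd card_nbhd_le n_pos
    by (intro divide_left_mono) (auto simp: card_gt_0_iff)
  ultimately show ?thesis by linarith
qed

lemma trimmed_mean_ge_gap:
  assumes lower: "\<forall>k<n. L \<le> angle t k" and "0 \<le> d"
    and pulled: "card (nbhd E (t mod n)) < 2 * card {k\<in>nbhd E (t mod n). L + d \<le> angle t k}"
  shows "L - angle t (t mod n) + d / real n \<le> trimmed_mean t (t mod n)"
proof -
  let ?j = "t mod n"
  have "nbhd E ?j \<noteq> {}" using pulled by auto
  interpret quarter_outliers "log_obs t ?j" "good_diffs t ?j"
    using quarter_outliers_log_obs[OF \<open>nbhd E ?j \<noteq> {}\<close>] .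
  have "size (filter_mset (\<lambda>x. L + d - angle t ?j \<le> x) (good_diffs t ?j))
      = card {k\<in>nbhd Eg ?j. L + d \<le> angle t k}"
    unfolding good_diffs_def using finite_nbhd by (simp add: filter_mset_image_mset)
  moreover have "card (nbhd E ?j) < 4 * card {k\<in>nbhd Eg ?j. L + d \<le> angle t k}"
    using majority_good_neighbours pulled n_pos by simp
  ultimately have "real (size (log_obs t ?j))
      < 4 * real (size (filter_mset (\<lambda>x. L + d - angle t ?j \<le> x) (good_diffs t ?j)))"
    unfolding log_obs_def by simp
  then have "L - angle t ?j + d / real (card (nbhd E ?j)) \<le> trimmed_mean t ?j"
    using ave_trim25_ge_gap[of "L - angle t ?j" "L + d - angle t ?j"] lower good_neighbour_less
      finite_nbhd \<open>0 \<le> d\<close> by (auto simp: good_diffs_def log_obs_def)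
  moreover have "d / real n \<le> d / real (card (nbhd E ?j))"
    using \<open>0 \<le> d\<close> \<open>nbhd E ?j \<noteq> {}\<close> finite_nbhd card_nbhd_le n_pos
    by (intro divide_left_mono) (auto simp: card_gt_0_iff)
  ultimately show ?thesis by linarith
qed

lemma updated_angle_bounded: "\<bar>angle t (t mod n) + \<eta> * trimmed_mean t (t mod n)\<bar> \<le> radius"
proof -
  let ?j = "t mod n"
  have "\<bar>angle t ?j\<bar> \<le> radius"
    using bounded n_pos by simp
  then have "(1 - \<eta>) * angle t ?j \<le> (1 - \<eta>) * radius" "(1 - \<eta>) * - radius \<le> (1 - \<eta>) * angle t ?j"
    using eta by (intro mult_left_mono; simp)+
  moreover have "trimmed_mean t ?j \<le> radius - angle t ?j" "- radius - angle t ?j \<le> trimmed_mean t ?j"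
    using bounded by (intro trimmed_mean_le trimmed_mean_ge; simp add: abs_le_iff minus_le_iff)+
  then have "angle t ?j + \<eta> * trimmed_mean t ?j \<le> (1 - \<eta>) * angle t ?j + \<eta> * radius"
    "(1 - \<eta>) * angle t ?j + \<eta> * - radius \<le> angle t ?j + \<eta> * trimmed_mean t ?j"
    using eta by (intro damped_step_le damped_step_ge; simp)+
  ultimately show ?thesis
    by (simp add: abs_le_iff algebra_simps)
qed

lemma angle_next: "angle (Suc t) (t mod n) = angle t (t mod n) + \<eta> * trimmed_mean t (t mod n)"
proof -
  let ?j = "t mod n"
  have "cnj (zs ?j) * z (Suc t) ?j * cnj c = cis (\<eta> * trimmed_mean t ?j) * (cnj (zs ?j) * z t ?j * cnj c)"
    unfolding z_next by (simp add: algebra_simps)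
  also have "\<dots> = cis (\<eta> * trimmed_mean t ?j) * cis (angle t ?j)"
    using n_pos by (simp only: cis_angle mod_less_divisor)
  also have "\<dots> = cis (angle t ?j + \<eta> * trimmed_mean t ?j)"
    by (simp add: cis_mult add.commute)
  finally have "angle (Suc t) ?j = Arg (cis (angle t ?j + \<eta> * trimmed_mean t ?j))"
    unfolding angle_def by (rule arg_cong)
  then show ?thesis
    using updated_angle_bounded radius by (simp add: Arg_cis_abs_less)
qed

lemma bounded_next: "\<forall>k<n. \<bar>angle (Suc t) k\<bar> \<le> radius"
  using bounded angle_next updated_angle_bounded angle_other by metis

end

lemma angle_bounded: "\<forall>k<n. \<bar>angle t k\<bar> \<le> radius"
  by (induction t) (use angle_0_le_radius bounded_next in auto)

lemma angle_step_le_convex: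
  assumes "\<forall>k<n. angle t k \<le> M"
  shows "\<forall>j<n. angle (Suc t) j \<le> (1 - \<eta>) * angle t j + \<eta> * M"
proof (intro allI impI)
  fix j assume "j < n"
  show "angle (Suc t) j \<le> (1 - \<eta>) * angle t j + \<eta> * M"
  proof (cases "j = t mod n")
    case True
    have "trimmed_mean t j \<le> M - angle t j"
      using trimmed_mean_le[OF angle_bounded assms] True by simp
    then have "angle t j + \<eta> * trimmed_mean t j \<le> (1 - \<eta>) * angle t j + \<eta> * M"
      using eta by (intro damped_step_le) auto
    then show ?thesis
      using angle_next[OF angle_bounded[of t]] True by simp
  next
    case False
    then show ?thesis
      using assms \<open>j < n\<close> eta angle_other damped_step_le[of \<eta> 0 M "angle t j"] by simp
  qed
qed

lemma angle_step_ge_convex: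
  assumes "\<forall>k<n. - angle t k \<le> M"
  shows "\<forall>j<n. - angle (Suc t) j \<le> (1 - \<eta>) * - angle t j + \<eta> * M"
proof (intro allI impI)
  fix j assume "j < n"
  have lower: "\<forall>k<n. - M \<le> angle t k"
    using assms by (auto simp: minus_le_iff)
  have "(1 - \<eta>) * angle t j + \<eta> * - M \<le> angle (Suc t) j"
  proof (cases "j = t mod n")
    case True
    have "- M - angle t j \<le> trimmed_mean t j"
      using trimmed_mean_ge[OF angle_bounded lower] True by simp
    then have "(1 - \<eta>) * angle t j + \<eta> * - M \<le> angle t j + \<eta> * trimmed_mean t j"
      using eta by (intro damped_step_ge) auto
    then show ?thesis
      using angle_next[OF angle_bounded[of t]] True by simp
  next
    case False
    then show ?thesis
      using lower \<open>j < n\<close> eta angle_other damped_step_ge[of \<eta> "- M" "angle t j" 0] by simp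
  qed
  then show "- angle (Suc t) j \<le> (1 - \<eta>) * - angle t j + \<eta> * M"
    by (simp add: algebra_simps)
qed

lemma angle_step_le_pulled:
  assumes "\<forall>k<n. angle t k \<le> M" "0 \<le> d"
    and "card (nbhd E (t mod n)) < 2 * card {k\<in>nbhd E (t mod n). angle t k \<le> M - d}"
  shows "angle (Suc t) (t mod n) \<le> M - \<eta> * d / real n"
proof -
  let ?j = "t mod n"
  have "trimmed_mean t ?j \<le> (M - d / real n) - angle t ?j"
    using trimmed_mean_le_gap[OF angle_bounded assms] by simp
  then have "angle t ?j + \<eta> * trimmed_mean t ?j \<le> (1 - \<eta>) * angle t ?j + \<eta> * (M - d / real n)"
    using eta by (intro damped_step_le) auto
  moreover have "(1 - \<eta>) * angle t ?j \<le> (1 - \<eta>) * M"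
    using assms(1) eta n_pos by (intro mult_left_mono) auto
  moreover have "(1 - \<eta>) * M + \<eta> * (M - d / real n) = M - \<eta> * d / real n"
    by (simp add: algebra_simps)
  ultimately show ?thesis
    using angle_next[OF angle_bounded[of t]] by linarith
qed

lemma angle_step_ge_pulled:
  assumes "\<forall>k<n. - angle t k \<le> M" "0 \<le> d"
    and "card (nbhd E (t mod n)) < 2 * card {k\<in>nbhd E (t mod n). - angle t k \<le> M - d}"
  shows "- angle (Suc t) (t mod n) \<le> M - \<eta> * d / real n"
proof -
  let ?j = "t mod n"
  have lower: "\<forall>k<n. - M \<le> angle t k"
    using assms(1) by (auto simp: minus_le_iff)
  have "{k\<in>nbhd E ?j. - angle t k \<le> M - d} = {k\<in>nbhd E ?j. - M + d \<le> angle t k}"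
    by auto
  then have "(- M + d / real n) - angle t ?j \<le> trimmed_mean t ?j"
    using trimmed_mean_ge_gap[OF angle_bounded lower assms(2)] assms(3) by simp
  then have "(1 - \<eta>) * angle t ?j + \<eta> * (- M + d / real n) \<le> angle t ?j + \<eta> * trimmed_mean t ?j"
    using eta by (intro damped_step_ge) auto
  moreover have "(1 - \<eta>) * - M \<le> (1 - \<eta>) * angle t ?j"
    using lower eta n_pos by (intro mult_left_mono) auto
  moreover have "(1 - \<eta>) * - M + \<eta> * (- M + d / real n) = - (M - \<eta> * d / real n)"
    by (simp add: algebra_simps)
  ultimately show ?thesis
    using angle_next[OF angle_bounded[of t]] by linarith
qed

lemma two_sided_sweep_angle:
  assumes expander: "\<forall>J. J \<subseteq> {..<n} \<and> J \<noteq> {} \<and> real (card J) \<le> real n / 2 \<longrightarrow>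
      (\<exists>j\<in>J. card (nbhd E j \<inter> ({..<n} - J)) > card (nbhd E j \<inter> J))"
  shows "two_sided_sweep n \<eta> (nbhd E) angle"
proof -
  have expansion: "\<And>J. J \<subseteq> {..<n} \<Longrightarrow> J \<noteq> {} \<Longrightarrow> real (card J) \<le> real n / 2 \<Longrightarrow>
      \<exists>j\<in>J. card (nbhd E j \<inter> J) < card (nbhd E j \<inter> ({..<n} - J))"
    using expander by blast
  show ?thesis
    using sweep_dynamics.intro[OF n_pos eta nbhd_sub expansion angle_step_le_convex angle_step_le_pulled]
      sweep_dynamics.intro[OF n_pos eta nbhd_sub expansion angle_step_ge_convex angle_step_ge_pulled]
    by (rule two_sided_sweep.intro)
qed

lemma d_ang_angle:
  assumes "j < n" "k < n"
  shows "d_ang (cnj (zs j) * z t j) (cnj (zs k) * z t k) = \<bar>angle t j - angle t k\<bar>"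
proof -
  have "cnj (zs j) * z t j * cnj (cnj (zs k) * z t k) = cis (angle t j - angle t k)"
    using cis_angle_diff[of k j] assms by simp
  moreover have "\<bar>angle t j - angle t k\<bar> < pi"
    using angle_diff_lt_pi[OF angle_bounded[of t]] assms by blast
  ultimately show ?thesis
    by (simp add: d_ang_def Arg_cis_abs_less)
qed

lemma delta_le_spread:
  assumes "\<forall>k<n. L \<le> angle t k \<and> angle t k \<le> M"
  shows "delta E zs (z t) \<le> M - L"
proof -
  have "L \<le> M" using assms n_pos by force
  moreover have "\<bar>angle t j - angle t k\<bar> \<le> M - L" if "j < n" "k < n" for j k
    using assms that by (simp add: abs_le_iff) (meson diff_mono order_trans)
  moreover have "finite E" using graph finite_subset by blast
  ultimately show ?thesis
    using graph unfolding delta_eq_Max_image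
    by (intro Max.boundedI) (auto simp: d_ang_angle)
qed

lemma delta_geometric:
  assumes expander: "\<forall>J. J \<subseteq> {..<n} \<and> J \<noteq> {} \<and> real (card J) \<le> real n / 2 \<longrightarrow>
      (\<exists>j\<in>J. card (nbhd E j \<inter> ({..<n} - J)) > card (nbhd E j \<inter> J))"
  shows "\<exists>C r. 0 < r \<and> r < 1 \<and> (\<forall>t. delta E zs (z t) \<le> C * r ^ t)"
proof -
  interpret two_sided_sweep n \<eta> "nbhd E" angle
    using two_sided_sweep_angle[OF expander] .
  define r where "r = contraction powr (1 / real (n * n))"
  have "0 < r"
    unfolding r_def using contraction_bounds by simp
  have "contraction powr (1 / real (n * n)) < 1 powr (1 / real (n * n))"
    using contraction_bounds n_pos by (intro powr_less_mono2) auto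
  then have "r < 1"
    unfolding r_def by simp
  have "spread 0 \<le> radius - - radius"
    using angle_0_le_radius by (intro spread_le) (auto simp: abs_le_iff minus_le_iff)
  have "delta E zs (z t) \<le> (2 * radius / contraction) * r ^ t" for t
  proof -
    have "delta E zs (z t) \<le> spread t"
      unfolding spread_def by (rule delta_le_spread[OF between_extremes])
    also have "\<dots> \<le> contraction ^ (t div (n * n)) * spread 0"
      by (rule spread_geometric)
    also have "\<dots> \<le> contraction ^ (t div (n * n)) * (2 * radius)"
      using \<open>spread 0 \<le> radius - - radius\<close> contraction_bounds by (intro mult_left_mono) auto
    also have "\<dots> \<le> (1 / contraction) * r ^ t * (2 * radius)"
      unfolding r_def using contraction_bounds n_pos radius
      by (intro mult_right_mono power_div_le_root_power) auto
    finally show ?thesis by (simp add: algebra_simps)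
  qed
  then show ?thesis
    using \<open>0 < r\<close> \<open>r < 1\<close> by blast
qed

end

lemma LIMSEQ_zero_geometric_bound:
  fixes f :: "nat \<Rightarrow> real"
  assumes "\<forall>t. 0 \<le> f t" "\<forall>t. f t \<le> C * r ^ t" "0 < r" "r < 1"
  shows "f \<longlonglongrightarrow> 0"
proof -
  have "(\<lambda>t. C * r ^ t) \<longlonglongrightarrow> 0"
    using assms(3,4) by (intro tendsto_mult_right_zero LIMSEQ_power_zero) simp
  then show ?thesis
    by (rule tendsto_sandwich[OF always_eventually[OF assms(1)] always_eventually[OF assms(2)] tendsto_const])
qed

theorem theorem3:
  fixes n :: nat and E Eg Eb :: "(nat \<times> nat) set"
    and zs :: "nat \<Rightarrow> complex" and zobs :: "nat \<Rightarrow> nat \<Rightarrow> complex"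
    and z :: "nat \<Rightarrow> nat \<Rightarrow> complex" and \<eta> :: real
  assumes graph: "E \<subseteq> {..<n} \<times> {..<n}" "sym E" "\<forall>j. (j, j) \<notin> E"
    and split: "E = Eg \<union> Eb" "Eg \<inter> Eb = {}" "sym Eg" "sym Eb"
    and zs_unit: "\<forall>j<n. cmod (zs j) = 1"
    and obs_unit: "\<forall>(j, k) \<in> E. cmod (zobs j k) = 1"
    and obs_good: "\<forall>(j, k) \<in> Eg. zobs j k = zs j * cnj (zs k)"
    and alpha0: "\<forall>j<n. real (card (nbhd Eb j)) / real (card (nbhd E j)) < 1 / 4"
    and init_unit: "\<forall>j<n. cmod (z 0 j) = 1"
    and init: "\<exists>c. cmod c = 1 \<and> (\<forall>j<n. d_ang c (cnj (zs j) * z 0 j) < pi / 2)"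
    and expander: "\<forall>J. J \<subseteq> {..<n} \<and> J \<noteq> {} \<and> real (card J) \<le> real n / 2 \<longrightarrow>
                      (\<exists>j\<in>J. card (nbhd E j \<inter> ({..<n} - J)) > card (nbhd E j \<inter> J))"
    and eta: "0 < \<eta>" "\<eta> < 1"
    and step_j: "\<forall>t. z (Suc t) (t mod n) = tas_update \<eta> E zobs (z t) (t mod n)"
    and step_other: "\<forall>t. \<forall>k<n. k \<noteq> t mod n \<longrightarrow> z (Suc t) k = z t k"
  shows "(\<lambda>t. delta E zs (z t)) \<longlonglongrightarrow> 0 \<and>
         (E = {(j, k). j < n \<and> k < n \<and> j \<noteq> k} \<longrightarrow>
            (\<exists>C r. 0 < r \<and> r < 1 \<and> (\<forall>t. delta E zs (z t) \<le> C * r ^ t)))"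
proof -
  have geometric: "\<exists>C r. 0 < r \<and> r < 1 \<and> (\<forall>t. delta E zs (z t) \<le> C * r ^ t)"
  proof (cases "n = 0")
    case True
    then have "\<forall>t. delta E zs (z t) \<le> 0 * (1 / 2) ^ t"
      using graph(1) by (simp add: delta_def)
    then show ?thesis
      by (intro exI[of _ 0] exI[of _ "1 / 2"] conjI) simp_all
  next
    case False
    obtain c where c: "cmod c = 1" "\<forall>j<n. d_ang c (cnj (zs j) * z 0 j) < pi / 2"
      using init by blast
    interpret trimmed_sync n E Eg Eb zs zobs z \<eta> c
      using False by (intro trimmed_sync.intro[OF _ graph(1) split(1,2) zs_unit obs_good alpha0
          init_unit c eta step_j step_other]) simp
    show ?thesis
      using delta_geometric[OF expander] .
  qed
  then obtain C r where "0 < r" "r < 1" and bound: "\<forall>t. delta E zs (z t) \<le> C * r ^ t"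
    by blast
  have "finite E"
    using graph(1) finite_subset by blast
  then have "\<forall>t. 0 \<le> delta E zs (z t)"
    by (simp add: delta_nonneg)
  then show ?thesis
    using LIMSEQ_zero_geometric_bound[OF _ bound \<open>0 < r\<close> \<open>r < 1\<close>] geometric by blast
qed

end
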